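(* For every $n\ge2$, every $K_n$-treelike graph is $\mathcal{C}$-$\mathrm{HH}$.
   Context: Graphs are simple; subgraphs are induced. A homomorphism maps edges to edges. A graph $G$ is $\mathcal{C}$-$\mathrm{HH}$ if every homomorphism from a finite connected induced subgraph of $G$ into $G$ extends to a homomorphism $G\to G$. For $n\ge2$, a $K_n$-treelike graph is a finite connected graph whose vertex set is covered by a family of $n$-element vertex sets (components), each inducing $K_n$, such that every edge lies inside some component, two distinct components share at most one vertex, and every induced cycle has all its vertices inside a single component. *)

theory Defs
  imports Main
begin

definition simple_graph :: "'a set \<Rightarrow> ('a \<Rightarrow> 'a \<Rightarrow> bool) \<Rightarrow> bool" where
  "simple_graph V E \<longleftrightarrow>
     (\<forall>x y. E x y \<longrightarrow> E y x) \<and> (\<forall>x. \<not> E x x) \<and> (\<forall>x y. E x y \<longrightarrow> x \<in> V \<and> y \<in> V)"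

definition connected_set :: "('a \<Rightarrow> 'a \<Rightarrow> bool) \<Rightarrow> 'a set \<Rightarrow> bool" where
  "connected_set E A \<longleftrightarrow> A \<noteq> {} \<and>
     (\<forall>x\<in>A. \<forall>y\<in>A. (\<lambda>u v. u \<in> A \<and> v \<in> A \<and> E u v)\<^sup>*\<^sup>* x y)"

definition graph_hom :: "('a \<Rightarrow> 'a \<Rightarrow> bool) \<Rightarrow> 'a set \<Rightarrow> 'a set \<Rightarrow> ('a \<Rightarrow> 'a) \<Rightarrow> bool" where
  "graph_hom E A V f \<longleftrightarrow> (\<forall>x\<in>A. f x \<in> V) \<and> (\<forall>x\<in>A. \<forall>y\<in>A. E x y \<longrightarrow> E (f x) (f y))"

definition C_HH :: "'a set \<Rightarrow> ('a \<Rightarrow> 'a \<Rightarrow> bool) \<Rightarrow> bool" where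
  "C_HH V E \<longleftrightarrow>
     (\<forall>A f. A \<subseteq> V \<and> finite A \<and> connected_set E A \<and> graph_hom E A V f \<longrightarrow>
        (\<exists>g. graph_hom E V V g \<and> (\<forall>x\<in>A. g x = f x)))"

definition induced_cycle :: "('a \<Rightarrow> 'a \<Rightarrow> bool) \<Rightarrow> 'a set \<Rightarrow> bool" where
  "induced_cycle E C \<longleftrightarrow> finite C \<and> card C \<ge> 3 \<and>
     (\<exists>v. bij_betw v {0..<card C} C \<and>
        (\<forall>i<card C. \<forall>j<card C.
            E (v i) (v j) \<longleftrightarrow> (j = Suc i mod card C \<or> i = Suc j mod card C)))"

definition clique :: "('a \<Rightarrow> 'a \<Rightarrow> bool) \<Rightarrow> 'a set \<Rightarrow> bool" where
  "clique E K \<longleftrightarrow> (\<forall>x\<in>K. \<forall>y\<in>K. x \<noteq> y \<longrightarrow> E x y)"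

definition Kn_treelike :: "nat \<Rightarrow> 'a set \<Rightarrow> ('a \<Rightarrow> 'a \<Rightarrow> bool) \<Rightarrow> bool" where
  "Kn_treelike n V E \<longleftrightarrow> simple_graph V E \<and> finite V \<and> connected_set E V \<and>
     (\<exists>\<K>. \<Union>\<K> = V \<and>
          (\<forall>K\<in>\<K>. K \<subseteq> V \<and> card K = n \<and> clique E K) \<and>
          (\<forall>x y. E x y \<longrightarrow> (\<exists>K\<in>\<K>. x \<in> K \<and> y \<in> K)) \<and>
          (\<forall>K\<in>\<K>. \<forall>K'\<in>\<K>. K \<noteq> K' \<longrightarrow> card (K \<inter> K') \<le> 1) \<and>
          (\<forall>C. C \<subseteq> V \<and> induced_cycle E C \<longrightarrow> (\<exists>K\<in>\<K>. C \<subseteq> K)))"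

end

theory Submission
  imports Defs
begin

text \<open>Extend a homomorphism from a connected set \<open>A\<close> one vertex at a time, always adding a
  vertex \<open>v\<close> adjacent to \<open>A\<close>. The neighbours of \<open>v\<close> in \<open>A\<close> are pairwise adjacent: a shortest
  path in \<open>A\<close> between two of them either closes with \<open>v\<close> to an induced cycle, which lies in a
  single component, or passes through a further neighbour of \<open>v\<close>, and then induction gives two
  triangles on the common edge from \<open>v\<close> to that neighbour, which lie in the same component. So
  \<open>v\<close> and its neighbourhood \<open>N\<close> lie in one component, whence \<open>|N| < n\<close>. The image of the
  clique \<open>N\<close> is a clique of the same size, hence lies in a component \<open>K\<close> that it does not
  exhaust, and \<open>v\<close> can be mapped to any vertex of \<open>K\<close> outside that image.\<close>

definition walk :: "('a \<Rightarrow> 'a \<Rightarrow> bool) \<Rightarrow> 'a set \<Rightarrow> 'a list \<Rightarrow> bool" where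
  "walk E A p \<longleftrightarrow> p \<noteq> [] \<and> set p \<subseteq> A \<and> successively E p"

definition induced_path :: "('a \<Rightarrow> 'a \<Rightarrow> bool) \<Rightarrow> 'a list \<Rightarrow> bool" where
  "induced_path E p \<longleftrightarrow> distinct p \<and>
     (\<forall>i<length p. \<forall>j<length p. E (p!i) (p!j) \<longleftrightarrow> j = Suc i \<or> i = Suc j)"

lemma successively_iff_nth:
  "successively P xs \<longleftrightarrow> (\<forall>i. Suc i < length xs \<longrightarrow> P (xs!i) (xs!Suc i))"
  by (induction P xs rule: successively.induct) (auto simp: nth_Cons split: nat.split)

lemma walk_take: "walk E A p \<Longrightarrow> 0 < k \<Longrightarrow> walk E A (take k p)"
  unfolding walk_def by (metis append_take_drop_id successively_append_iff set_take_subset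
      order_trans take_eq_Nil neq0_conv)

lemma walk_drop: "walk E A p \<Longrightarrow> k < length p \<Longrightarrow> walk E A (drop k p)"
  unfolding walk_def by (metis append_take_drop_id successively_append_iff set_drop_subset
      order_trans drop_eq_Nil not_le)

lemma walk_append_overlap: "walk E A p \<Longrightarrow> walk E A (last p # q) \<Longrightarrow> walk E A (p @ q)"
  unfolding walk_def by (auto simp: successively_append_iff successively_Cons)

lemma walk_append: "walk E A p \<Longrightarrow> walk E A q \<Longrightarrow> E (last p) (hd q) \<Longrightarrow> walk E A (p @ q)"
  by (rule walk_append_overlap) (auto simp: walk_def successively_Cons)

lemma walk_edge: "walk E A p \<Longrightarrow> Suc i < length p \<Longrightarrow> E (p!i) (p!Suc i)"
  by (simp add: walk_def successively_iff_nth)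

lemma rtranclp_imp_walk:
  assumes "(\<lambda>u v. u \<in> A \<and> v \<in> A \<and> E u v)\<^sup>*\<^sup>* x y" "y \<in> A"
  shows "\<exists>p. walk E A p \<and> hd p = x \<and> last p = y"
  using assms
proof (induction rule: converse_rtranclp_induct)
  case base
  show ?case by (rule exI[of _ "[y]"]) (simp add: walk_def \<open>y \<in> A\<close>)
next
  case (step x z)
  then obtain p where "walk E A p" "hd p = z" "last p = y" by blast
  with step.hyps show ?case
    by (intro exI[of _ "x # p"]) (auto simp: walk_def successively_Cons)
qed

lemma shortest_walk_induced_path:
  assumes sym: "\<And>x y. E x y \<Longrightarrow> E y x" and irr: "\<And>x. \<not> E x x"
    and p: "walk E A p"
    and shortest: "\<And>q. walk E A q \<Longrightarrow> hd q = hd p \<Longrightarrow> last q = last p \<Longrightarrow> length p \<le> length q"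
  shows "induced_path E p"
proof -
  have ends: "hd (take (Suc i) p @ q) = hd p" "last (r @ drop j p) = last p"
    if "j < length p" for i j q r
    using that p by (auto simp: walk_def)
  have no_chord: "j = Suc i" if "i < j" "j < length p" "E (p!i) (p!j)" for i j
  proof (rule ccontr)
    assume "j \<noteq> Suc i"
    let ?q = "take (Suc i) p @ drop j p"
    have "walk E A ?q"
      using that p by (intro walk_append walk_take walk_drop)
        (auto simp: take_Suc_conv_app_nth hd_drop_conv_nth)
    then show False
      using shortest[of ?q] ends[OF \<open>j < length p\<close>] that \<open>j \<noteq> Suc i\<close> by fastforce
  qed
  have no_repeat: "p!i \<noteq> p!j" if "i < j" "j < length p" for i j
  proof
    assume eq: "p!i = p!j"
    let ?q = "take (Suc i) p @ drop (Suc j) p"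
    have "walk E A (last (take (Suc i) p) # drop (Suc j) p)"
      using that eq walk_drop[OF p, of j] by (simp add: take_Suc_conv_app_nth Cons_nth_drop_Suc)
    then have "walk E A ?q"
      using that p by (intro walk_append_overlap walk_take) auto
    moreover have "last ?q = last p"
    proof (cases "Suc j = length p")
      case True
      then have "last p = p!j"
        by (metis diff_Suc_1 last_conv_nth list.size(3) nat.distinct(1))
      with True that eq show ?thesis by (simp add: take_Suc_conv_app_nth)
    qed (use that in auto)
    ultimately show False
      using shortest[of ?q] ends[OF \<open>j < length p\<close>] that by fastforce
  qed
  have "distinct p"
    by (metis distinct_conv_nth linorder_neq_iff no_repeat)
  moreover have "E (p!i) (p!j) \<longleftrightarrow> j = Suc i \<or> i = Suc j" if "i < length p" "j < length p" for i j
    using no_chord[of i j] no_chord[of j i] walk_edge[OF p, of i] walk_edge[OF p, of j] that sym irr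
    by (cases i j rule: linorder_cases) auto
  ultimately show ?thesis
    by (simp add: induced_path_def)
qed

lemma walk_shorten_to_induced_path:
  assumes sym: "\<And>x y. E x y \<Longrightarrow> E y x" and irr: "\<And>x. \<not> E x x" and "walk E A p"
  obtains q where "walk E A q" "hd q = hd p" "last q = last p" "length q \<le> length p"
    "induced_path E q"
proof -
  obtain q where q: "walk E A q" "hd q = hd p" "last q = last p"
    and shortest: "\<And>q'. walk E A q' \<and> hd q' = hd p \<and> last q' = last p \<Longrightarrow> length q \<le> length q'"
    using ex_has_least_nat[of "\<lambda>q. walk E A q \<and> hd q = hd p \<and> last q = last p" p length] assms(3)
    by blast
  moreover have "induced_path E q"
    using shortest q by (intro shortest_walk_induced_path[OF sym irr q(1)]) auto
  ultimately show thesis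
    using that shortest assms(3) by blast
qed

lemma induced_cycle_close_path:
  assumes sym: "\<And>x y. E x y \<Longrightarrow> E y x" and irr: "\<And>x. \<not> E x x"
    and p: "induced_path E p" "2 \<le> length p" "v \<notin> set p"
    and v_adj: "\<And>i. i < length p \<Longrightarrow> E v (p!i) \<longleftrightarrow> i = 0 \<or> i = length p - 1"
  shows "induced_cycle E (set (p @ [v]))"
proof -
  let ?c = "p @ [v]" and ?L = "length p"
  have "distinct ?c"
    using p by (simp add: induced_path_def)
  then have card: "card (set ?c) = Suc ?L"
    by (simp add: distinct_card)
  have "E (?c!i) (?c!j) \<longleftrightarrow> j = Suc i mod Suc ?L \<or> i = Suc j mod Suc ?L"
    if ij: "i < Suc ?L" "j < Suc ?L" for i j
  proof -
    consider "i < ?L" "j < ?L" | "i < ?L" "j = ?L" | "i = ?L" "j < ?L" | "i = ?L" "j = ?L"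
      using ij by (metis less_SucE)
    then show ?thesis
    proof cases
      case 1
      then show ?thesis using p by (simp add: induced_path_def nth_append)
    next
      case 2
      then show ?thesis using v_adj[of i] sym p(2) by (auto simp: nth_append)
    next
      case 3
      then show ?thesis using v_adj[of j] p(2) by (auto simp: nth_append)
    next
      case 4
      then show ?thesis using irr p(2) by (auto simp: nth_append)
    qed
  qed
  moreover have "bij_betw ((!) ?c) {0..<Suc ?L} (set ?c)"
    using \<open>distinct ?c\<close> by (intro bij_betw_nth) auto
  ultimately show ?thesis
    unfolding induced_cycle_def card using p(2)
    by (intro conjI exI[of _ "(!) ?c"]) auto
qed

lemma induced_cycle_triangle:
  assumes "\<And>x y. E x y \<Longrightarrow> E y x" and "\<And>x. \<not> E x x"
    and "E x y" "E y z" "E x z"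
  shows "induced_cycle E {x, y, z}"
proof -
  have "induced_path E [x, z]"
    using assms by (auto simp: induced_path_def less_Suc_eq)
  moreover have "y \<notin> set [x, z]"
    using assms by auto
  ultimately have "induced_cycle E (set ([x, z] @ [y]))"
    using assms by (intro induced_cycle_close_path) (auto simp: less_Suc_eq)
  then show ?thesis
    by (simp add: insert_commute)
qed

lemma graph_hom_inj_on_clique:
  assumes "\<And>x. \<not> E x x" and "graph_hom E A V f" "clique E N" "N \<subseteq> A"
  shows "inj_on f N"
  using assms unfolding graph_hom_def clique_def inj_on_def by (metis subsetD)

lemma graph_hom_image_clique:
  assumes "graph_hom E A V f" "clique E N" "N \<subseteq> A"
  shows "clique E (f ` N)"
  using assms unfolding graph_hom_def clique_def by fastforce

lemma graph_hom_fun_upd: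
  assumes sym: "\<And>x y. E x y \<Longrightarrow> E y x" and irr: "\<And>x. \<not> E x x"
    and f: "graph_hom E A V f" and "w \<in> V"
    and w_adj: "\<And>x. x \<in> A \<Longrightarrow> E v x \<Longrightarrow> E (f x) w"
  shows "graph_hom E (insert v A) V (f(v := w))"
proof -
  have "E ((f(v := w)) x) ((f(v := w)) y)" if "x \<in> insert v A" "y \<in> insert v A" "E x y" for x y
    using that f w_adj sym irr unfolding graph_hom_def by (cases "x = v"; cases "y = v") auto
  with f \<open>w \<in> V\<close> show ?thesis
    unfolding graph_hom_def by auto
qed

lemma connected_set_insert:
  assumes sym: "\<And>x y. E x y \<Longrightarrow> E y x"
    and A: "connected_set E A" and x: "x \<in> A" "E x v"
  shows "connected_set E (insert v A)"
proof -
  let ?R = "\<lambda>a b. a \<in> insert v A \<and> b \<in> insert v A \<and> E a b"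
  have within_A: "?R\<^sup>*\<^sup>* a b" if "a \<in> A" "b \<in> A" for a b
  proof -
    have "(\<lambda>a b. a \<in> A \<and> b \<in> A \<and> E a b)\<^sup>*\<^sup>* a b"
      using A that unfolding connected_set_def by blast
    then show ?thesis
      by (rule rtranclp_mono[THEN predicate2D, rotated]) auto
  qed
  have to_x: "?R\<^sup>*\<^sup>* a x" and from_x: "?R\<^sup>*\<^sup>* x a" if "a \<in> insert v A" for a
    using that within_A[OF _ x(1)] within_A[OF x(1)] x sym by auto
  show ?thesis
    unfolding connected_set_def using to_x from_x by (blast intro: rtranclp_trans)
qed

lemma connected_set_edge_leaving:
  assumes "connected_set E V" "a \<in> A" "A \<subseteq> V" "u \<in> V" "u \<notin> A"
  shows "\<exists>x\<in>A. \<exists>v\<in>V. v \<notin> A \<and> E x v"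
proof -
  have "(\<lambda>u v. u \<in> V \<and> v \<in> V \<and> E u v)\<^sup>*\<^sup>* a u"
    using assms unfolding connected_set_def by blast
  then show ?thesis
    using \<open>a \<in> A\<close> \<open>u \<notin> A\<close>
    by (induction rule: rtranclp_induct) auto
qed

text \<open>The hypothesis \<open>2 \<le> n\<close> of the theorem is only needed to make the components finite.\<close>

locale Kn_treelike_cover =
  fixes n :: nat and V :: "'a set" and E :: "'a \<Rightarrow> 'a \<Rightarrow> bool" and \<K> :: "'a set set"
  assumes n_pos: "0 < n"
    and sym: "\<And>x y. E x y \<Longrightarrow> E y x" and irr: "\<And>x. \<not> E x x"
    and edge_in_V: "\<And>x y. E x y \<Longrightarrow> x \<in> V"
    and components_cover: "\<Union>\<K> = V"
    and component: "\<And>K. K \<in> \<K> \<Longrightarrow> K \<subseteq> V \<and> card K = n \<and> clique E K"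
    and edge_in_component: "\<And>x y. E x y \<Longrightarrow> \<exists>K\<in>\<K>. x \<in> K \<and> y \<in> K"
    and components_meet: "\<And>K K'. K \<in> \<K> \<Longrightarrow> K' \<in> \<K> \<Longrightarrow> K \<noteq> K' \<Longrightarrow> card (K \<inter> K') \<le> 1"
    and induced_cycle_in_component: "\<And>C. C \<subseteq> V \<Longrightarrow> induced_cycle E C \<Longrightarrow> \<exists>K\<in>\<K>. C \<subseteq> K"
begin

lemma component_finite: "K \<in> \<K> \<Longrightarrow> finite K"
  using component[of K] n_pos by (auto intro: card_ge_0_finite)

lemma component_edge: "K \<in> \<K> \<Longrightarrow> x \<in> K \<Longrightarrow> y \<in> K \<Longrightarrow> x \<noteq> y \<Longrightarrow> E x y"
  using component unfolding clique_def by blast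

lemma component_eq:
  assumes "K \<in> \<K>" "K' \<in> \<K>" "x \<in> K" "y \<in> K" "x \<in> K'" "y \<in> K'" "x \<noteq> y"
  shows "K = K'"
proof (rule ccontr)
  assume "K \<noteq> K'"
  have "card {x, y} \<le> card (K \<inter> K')"
    using assms component_finite by (intro card_mono) auto
  with components_meet[OF assms(1,2) \<open>K \<noteq> K'\<close>] \<open>x \<noteq> y\<close> show False
    by simp
qed

lemma triangle_in_component:
  assumes "E x y" "E y z" "E x z"
  shows "\<exists>K\<in>\<K>. x \<in> K \<and> y \<in> K \<and> z \<in> K"
proof -
  have "{x, y, z} \<subseteq> V"
    using edge_in_V[OF \<open>E x y\<close>] edge_in_V[OF \<open>E y z\<close>] edge_in_V[OF sym[OF \<open>E x z\<close>]]
    by simp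
  then obtain K where "K \<in> \<K>" "{x, y, z} \<subseteq> K"
    using induced_cycle_in_component induced_cycle_triangle[OF sym irr assms] by blast
  then show ?thesis
    by auto
qed

lemma clique_in_component:
  assumes "clique E C" "C \<noteq> {}" "C \<subseteq> V"
  shows "\<exists>K\<in>\<K>. C \<subseteq> K"
proof -
  obtain x where x: "x \<in> C"
    using assms by auto
  show ?thesis
  proof (cases "C = {x}")
    case True
    then show ?thesis
      using x components_cover assms by auto
  next
    case False
    then obtain y where y: "y \<in> C" "y \<noteq> x"
      using x by auto
    then have "E x y"
      using assms x unfolding clique_def by auto
    then obtain K where K: "K \<in> \<K>" "x \<in> K" "y \<in> K"
      using edge_in_component by blast
    have "z \<in> K" if "z \<in> C" "z \<noteq> x" "z \<noteq> y" for z
    proof -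
      have "E y z" "E x z"
        using assms that x y unfolding clique_def by auto
      then obtain K' where "K' \<in> \<K>" "x \<in> K'" "y \<in> K'" "z \<in> K'"
        using triangle_in_component \<open>E x y\<close> by blast
      with component_eq[OF K(1) _ K(2,3)] y(2) show ?thesis
        by blast
    qed
    with K show ?thesis
      by blast
  qed
qed

lemma adjacent_if_triangles_on_edge:
  assumes "E v c" "E v a" "E a c" "E v b" "E c b" "a \<noteq> b"
  shows "E a b"
proof -
  obtain K K' where "K \<in> \<K>" "v \<in> K" "a \<in> K" "c \<in> K" "K' \<in> \<K>" "v \<in> K'" "c \<in> K'" "b \<in> K'"
    using triangle_in_component assms(1-5) by metis
  moreover have "v \<noteq> c"
    using assms(1) irr by auto
  ultimately show ?thesis
    using component_eq component_edge \<open>a \<noteq> b\<close> by metis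
qed

lemma walk_ends_adjacent:
  assumes "walk E A p" "A \<subseteq> V" "v \<notin> A" "E v (hd p)" "E v (last p)" "hd p \<noteq> last p"
  shows "E (hd p) (last p)"
  using assms
proof (induction "length p" arbitrary: p rule: less_induct)
  case less
  let ?a = "hd p" and ?b = "last p"
  obtain q where q: "walk E A q" "hd q = ?a" "last q = ?b" "length q \<le> length p"
    and q_path: "induced_path E q"
    using walk_shorten_to_induced_path[OF sym irr less.prems(1)] by blast
  define L where "L = length q"
  have a: "q!0 = ?a" and b: "q!(L-1) = ?b"
    using q by (auto simp: L_def walk_def hd_conv_nth last_conv_nth)
  have "L \<noteq> 0" "L \<noteq> 1"
    using q less.prems(6) a b by (auto simp: L_def walk_def)
  then have "2 \<le> L"
    by linarith
  show ?case
  proof (cases "\<exists>i. 0 < i \<and> i < L - 1 \<and> E v (q!i)")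
    case True
    then obtain i where i: "0 < i" "i < L - 1" "E v (q!i)"
      by blast
    have "distinct q" "0 < length q" "i < length q"
      using q_path i by (auto simp: induced_path_def L_def)
    then have "q!0 \<noteq> q!i" "q!i \<noteq> q!(L-1)"
      using i by (simp_all add: nth_eq_iff_index_eq L_def)
    then have distinct: "?a \<noteq> q!i" "q!i \<noteq> ?b"
      using a b by simp_all
    have "E ?a (q!i)"
      using less.hyps[of "take (Suc i) q"] walk_take[OF q(1)] i less.prems distinct q(2,4)
      by (auto simp: L_def take_Suc_conv_app_nth hd_conv_nth)
    moreover have "E (q!i) ?b"
      using less.hyps[of "drop i q"] walk_drop[OF q(1)] i less.prems distinct q(3,4)
      by (auto simp: L_def hd_drop_conv_nth)
    ultimately show ?thesis
      using adjacent_if_triangles_on_edge i(3) less.prems(4-6) by blast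
  next
    case False
    have "E v (q!i) \<longleftrightarrow> i = 0 \<or> i = L - 1" if "i < L" for i
    proof -
      have "i = 0 \<or> i = L - 1 \<or> 0 < i \<and> i < L - 1"
        using that by linarith
      then show ?thesis
        using False less.prems(4,5) a b by auto
    qed
    moreover have "v \<notin> set q"
      using q less.prems(3) by (auto simp: walk_def)
    ultimately have "induced_cycle E (set (q @ [v]))"
      using \<open>2 \<le> L\<close> by (intro induced_cycle_close_path[OF sym irr q_path]) (auto simp: L_def)
    moreover have "set (q @ [v]) \<subseteq> V"
      using q less.prems edge_in_V[OF less.prems(4)] by (auto simp: walk_def)
    ultimately obtain K where "K \<in> \<K>" "set (q @ [v]) \<subseteq> K"
      using induced_cycle_in_component by meson
    moreover have "?a \<in> set q" "?b \<in> set q"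
      using q(1) unfolding q(2,3)[symmetric] walk_def by auto
    ultimately show ?thesis
      using component_edge[of K ?a ?b] less.prems(6) by auto
  qed
qed

lemma neighbours_adjacent:
  assumes "connected_set E A" "A \<subseteq> V" "v \<notin> A" "a \<in> A" "b \<in> A" "E v a" "E v b" "a \<noteq> b"
  shows "E a b"
proof -
  have "(\<lambda>u v. u \<in> A \<and> v \<in> A \<and> E u v)\<^sup>*\<^sup>* a b"
    using assms unfolding connected_set_def by blast
  then obtain p where "walk E A p" "hd p = a" "last p = b"
    using rtranclp_imp_walk[OF _ \<open>b \<in> A\<close>] by blast
  with assms show ?thesis
    using walk_ends_adjacent[of A p v] by simp
qed

lemma hom_extend_to_neighbour:
  assumes A: "A \<subseteq> V" "connected_set E A" and f: "graph_hom E A V f"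
    and "x \<in> A" "E x v" "v \<notin> A"
  shows "\<exists>w. graph_hom E (insert v A) V (f(v := w))"
proof -
  define N where "N = {y \<in> A. E v y}"
  have "x \<in> N"
    using \<open>x \<in> A\<close> sym[OF \<open>E x v\<close>] by (simp add: N_def)
  have "clique E (insert v N)"
    unfolding clique_def
  proof (intro ballI impI)
    fix y z
    assume "y \<in> insert v N" "z \<in> insert v N" "y \<noteq> z"
    then show "E y z"
      using neighbours_adjacent[OF A(2,1) \<open>v \<notin> A\<close>, of y z] sym[of v y] by (auto simp: N_def)
  qed
  moreover have "insert v N \<subseteq> V"
    using A edge_in_V[OF sym[OF \<open>E x v\<close>]] by (auto simp: N_def)
  ultimately obtain K where K: "K \<in> \<K>" "insert v N \<subseteq> K"
    using clique_in_component by blast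
  have "finite N"
    using finite_subset[OF K(2) component_finite[OF K(1)]] by simp
  have "Suc (card N) = card (insert v N)"
    using \<open>finite N\<close> \<open>v \<notin> A\<close> by (simp add: N_def)
  also have "\<dots> \<le> n"
    using card_mono[OF component_finite[OF K(1)] K(2)] component[OF K(1)] by simp
  finally have "card N < n"
    by simp
  have N_clique: "clique E N" "N \<subseteq> A"
    using \<open>clique E (insert v N)\<close> unfolding clique_def N_def by blast+
  have "card (f ` N) < n"
    using card_image[OF graph_hom_inj_on_clique[OF irr f N_clique]] \<open>card N < n\<close> by simp
  have "f ` N \<noteq> {}" "f ` N \<subseteq> V"
    using \<open>x \<in> N\<close> N_clique f by (auto simp: graph_hom_def)
  then obtain K' where K': "K' \<in> \<K>" "f ` N \<subseteq> K'"
    using clique_in_component graph_hom_image_clique[OF f N_clique] by meson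
  have "\<not> K' \<subseteq> f ` N"
  proof
    assume "K' \<subseteq> f ` N"
    then have "card K' \<le> card (f ` N)"
      using \<open>finite N\<close> by (simp add: card_mono)
    with \<open>card (f ` N) < n\<close> component[OF K'(1)] show False
      by simp
  qed
  then obtain w where w: "w \<in> K'" "w \<notin> f ` N"
    by blast
  have "graph_hom E (insert v A) V (f(v := w))"
  proof (rule graph_hom_fun_upd[OF sym irr f])
    show "w \<in> V"
      using K' w component by blast
    show "E (f y) w" if "y \<in> A" "E v y" for y
      using component_edge[OF K'(1)] K' w that by (auto simp: N_def)
  qed
  then show ?thesis
    by blast
qed

lemma hom_extends:
  assumes "finite V" "connected_set E V"
    and "A \<subseteq> V" "connected_set E A" "graph_hom E A V f"
  shows "\<exists>g. graph_hom E V V g \<and> (\<forall>x\<in>A. g x = f x)"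
  using assms(3-)
proof (induction "card (V - A)" arbitrary: A f rule: less_induct)
  case less
  show ?case
  proof (cases "A = V")
    case False
    obtain a where "a \<in> A"
      using less.prems(2) unfolding connected_set_def by blast
    moreover obtain u where "u \<in> V" "u \<notin> A"
      using less.prems(1) False by blast
    ultimately obtain x v where xv: "x \<in> A" "v \<in> V" "v \<notin> A" "E x v"
      using connected_set_edge_leaving[OF assms(2) _ less.prems(1)] by blast
    then obtain w where hom: "graph_hom E (insert v A) V (f(v := w))"
      using hom_extend_to_neighbour[OF less.prems xv(1,4,3)] by blast
    have "V - insert v A = (V - A) - {v}"
      by blast
    then have "card (V - insert v A) < card (V - A)"
      using assms(1) xv(2,3) by (metis DiffI card_Diff1_less finite_Diff)
    moreover have "insert v A \<subseteq> V"
      using xv less.prems(1) by blast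
    moreover have "connected_set E (insert v A)"
      using connected_set_insert[OF sym less.prems(2) xv(1,4)] .
    ultimately obtain g where "graph_hom E V V g" "\<forall>y\<in>insert v A. g y = (f(v := w)) y"
      using less.hyps hom by blast
    then show ?thesis
      using xv(3) by auto
  qed (use less.prems in auto)
qed

end

lemma Kn_treelike_cover_exists:
  assumes "0 < n" "Kn_treelike n V E"
  obtains \<K> where "Kn_treelike_cover n V E \<K>"
proof -
  obtain \<K> where G: "simple_graph V E"
    and \<K>: "\<Union>\<K> = V" "\<forall>K\<in>\<K>. K \<subseteq> V \<and> card K = n \<and> clique E K"
      "\<forall>x y. E x y \<longrightarrow> (\<exists>K\<in>\<K>. x \<in> K \<and> y \<in> K)"
      "\<forall>K\<in>\<K>. \<forall>K'\<in>\<K>. K \<noteq> K' \<longrightarrow> card (K \<inter> K') \<le> 1"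
      "\<forall>C. C \<subseteq> V \<and> induced_cycle E C \<longrightarrow> (\<exists>K\<in>\<K>. C \<subseteq> K)"
    using assms(2) unfolding Kn_treelike_def by (elim conjE exE) (rule that)
  show thesis
  proof (rule that, unfold_locales)
    show "0 < n"
      by (fact assms(1))
    show "E y x" "x \<in> V" if "E x y" for x y
      using G(1) that unfolding simple_graph_def by blast+
    show "\<not> E x x" for x
      using G(1) unfolding simple_graph_def by blast
    show "\<Union>\<K> = V"
      by (fact \<K>(1))
    show "K \<subseteq> V \<and> card K = n \<and> clique E K" if "K \<in> \<K>" for K
      using \<K>(2) that by blast
    show "\<exists>K\<in>\<K>. x \<in> K \<and> y \<in> K" if "E x y" for x y
      using \<K>(3) that by blast
    show "card (K \<inter> K') \<le> 1" if "K \<in> \<K>" "K' \<in> \<K>" "K \<noteq> K'" for K K'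
      using \<K>(4) that by blast
    show "\<exists>K\<in>\<K>. C \<subseteq> K" if "C \<subseteq> V" "induced_cycle E C" for C
      using \<K>(5) that by blast
  qed
qed

theorem lemma5p1:
  fixes n :: nat and V :: "'a set" and E :: "'a \<Rightarrow> 'a \<Rightarrow> bool"
  assumes "n \<ge> 2"
    and "Kn_treelike n V E"
  shows "C_HH V E"
proof -
  have "0 < n"
    using assms(1) by simp
  then obtain \<K> where "Kn_treelike_cover n V E \<K>"
    using assms(2) by (rule Kn_treelike_cover_exists)
  then interpret Kn_treelike_cover n V E \<K> .
  have "finite V" "connected_set E V"
    using assms(2) by (simp_all only: Kn_treelike_def)
  then show ?thesis
    unfolding C_HH_def using hom_extends by blast
qed

end
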